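(* Let $f=f(n)\ge0$ with $f\to\infty$. There exists a constant $C>0$ such that, for all sufficiently large $n$ and every $f/n\le p\le1$, with probability at least $1-e^{-C(pn)^{1/3}}$ the number of vertices of $\mathcal G(n,p)$ whose degree lies outside $[\bar d-(pn)^{2/3},\bar d+(pn)^{2/3}]$ is at most $n/e^{Cf^{1/3}}$.
   Context: $\mathcal G(n,p)$ is the Erdős–Rényi random graph on $[n]$, each edge present independently with probability $p$. $\bar d=2m/(n-1)$, where $m$ is the number of edges of $\mathcal G(n,p)$. The constant $C$ does not depend on $p$. *)

theory Defs
  imports "HOL-Analysis.Analysis"
begin

text \<open>Vertex set [n] is {0..<n}; a graph on [n] is a set of pairs (i,j) with i<j<n.\<close>
definition gpairs :: "nat \<Rightarrow> (nat \<times> nat) set" where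
  "gpairs n = {(i,j). i < j \<and> j < n}"

definition gnp_prob :: "nat \<Rightarrow> real \<Rightarrow> ((nat \<times> nat) set \<Rightarrow> bool) \<Rightarrow> real" where
  "gnp_prob n p P = (\<Sum>S\<in>Pow (gpairs n).
      if P S then p ^ card S * (1 - p) ^ (card (gpairs n) - card S) else 0)"

definition gdeg :: "(nat \<times> nat) set \<Rightarrow> nat \<Rightarrow> nat" where
  "gdeg S v = card {e\<in>S. fst e = v \<or> snd e = v}"

definition avg_deg :: "nat \<Rightarrow> (nat \<times> nat) set \<Rightarrow> real" where
  "avg_deg n S = 2 * real (card S) / (real n - 1)"

definition num_atypical :: "nat \<Rightarrow> real \<Rightarrow> (nat \<times> nat) set \<Rightarrow> nat" where
  "num_atypical n x S = card {v. v < n \<and>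
      (real (gdeg S v) < avg_deg n S - x \<or> real (gdeg S v) > avg_deg n S + x)}"

end

theory Submission
  imports Defs
begin

text \<open>
  Write \<open>y = (pn)^(1/3)\<close>. By Chernoff's bound, the degree of a fixed vertex differs from its
  mean \<open>p(n-1)\<close> by at least \<open>y^2/3\<close>, or the number of edges from its mean by at least
  \<open>(n-1)y^2/6\<close>, only with probability \<open>4 exp(-y/144)\<close>. Outside these two events the average
  degree is within \<open>y^2/3\<close> of \<open>pn\<close>, so the vertex has degree within \<open>y^2\<close> of it. Markov's
  inequality for the number of atypical vertices then gives the claim, since \<open>f \<le> pn\<close>.
\<close>

definition subset_weight :: "'a set \<Rightarrow> real \<Rightarrow> 'a set \<Rightarrow> real" where
  "subset_weight A p S = p ^ card S * (1 - p) ^ (card A - card S)"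

definition subset_prob :: "'a set \<Rightarrow> real \<Rightarrow> ('a set \<Rightarrow> bool) \<Rightarrow> real" where
  "subset_prob A p P = (\<Sum>S\<in>Pow A. if P S then subset_weight A p S else 0)"

lemma subset_weight_nonneg: "0 \<le> p \<Longrightarrow> p \<le> 1 \<Longrightarrow> 0 \<le> subset_weight A p S"
  unfolding subset_weight_def by simp

lemma sum_subset_weight_power_card_Int:
  assumes A: "finite A" and B: "B \<subseteq> A"
  shows "(\<Sum>S\<in>Pow A. subset_weight A p S * c ^ card (S \<inter> B)) = (p * c + (1 - p)) ^ card B"
proof -
  define a where "a e = (if e \<in> B then c else 1)" for e
  have summand: "(\<Prod>e\<in>S. p * a e) * (\<Prod>e\<in>A - S. 1 - p) = subset_weight A p S * c ^ card (S \<inter> B)"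
    if "S \<in> Pow A" for S
  proof -
    have "finite S" using that A finite_subset by auto
    then have "(\<Prod>e\<in>S. a e) = c ^ card (S \<inter> B)"
      unfolding a_def by (simp add: prod.inter_filter[symmetric] Int_def)
    moreover have "card (A - S) = card A - card S"
      using that A by (simp add: card_Diff_subset finite_subset)
    ultimately show ?thesis unfolding subset_weight_def by (simp add: prod.distrib)
  qed
  have "(\<Prod>e\<in>A. p * a e + (1 - p)) = (\<Prod>e\<in>A. if e \<in> B then p * c + (1 - p) else 1)"
    unfolding a_def by (rule prod.cong) auto
  also have "\<dots> = (p * c + (1 - p)) ^ card B"
    using A B by (simp add: prod.inter_filter[symmetric] Int_absorb1 flip: Int_def)
  finally show ?thesis
    using prod_add[OF A, of "\<lambda>e. p * a e" "\<lambda>_. 1 - p"] summand by simp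
qed

lemma sum_subset_weight: "finite A \<Longrightarrow> (\<Sum>S\<in>Pow A. subset_weight A p S) = 1"
  using sum_subset_weight_power_card_Int[of A "{}" p 1] by simp

lemma subset_prob_mono:
  "0 \<le> p \<Longrightarrow> p \<le> 1 \<Longrightarrow> (\<And>S. S \<subseteq> A \<Longrightarrow> P S \<Longrightarrow> Q S) \<Longrightarrow> subset_prob A p P \<le> subset_prob A p Q"
  unfolding subset_prob_def by (rule sum_mono) (auto simp: subset_weight_nonneg)

lemma subset_prob_disj:
  "0 \<le> p \<Longrightarrow> p \<le> 1 \<Longrightarrow> subset_prob A p (\<lambda>S. P S \<or> Q S) \<le> subset_prob A p P + subset_prob A p Q"
  unfolding subset_prob_def sum.distrib[symmetric]
  by (rule sum_mono) (auto simp: subset_weight_nonneg)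

lemma subset_prob_not: "finite A \<Longrightarrow> subset_prob A p (\<lambda>S. \<not> P S) = 1 - subset_prob A p P"
  unfolding eq_diff_eq sum_subset_weight[of A p, symmetric] subset_prob_def sum.distrib[symmetric]
  by (rule sum.cong) auto

lemma subset_prob_markov:
  assumes "0 \<le> p" "p \<le> 1" "\<And>S. S \<subseteq> A \<Longrightarrow> 0 \<le> F S" "\<And>S. S \<subseteq> A \<Longrightarrow> P S \<Longrightarrow> 1 \<le> F S"
  shows "subset_prob A p P \<le> (\<Sum>S\<in>Pow A. subset_weight A p S * F S)"
  unfolding subset_prob_def
proof (rule sum_mono)
  fix S assume "S \<in> Pow A"
  then show "(if P S then subset_weight A p S else 0) \<le> subset_weight A p S * F S"
    using assms subset_weight_nonneg[of p A S] by (auto simp: mult_le_cancel_left1)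
qed

lemma subset_prob_card_gt:
  assumes "0 \<le> p" "p \<le> 1" "0 < T" "finite V"
  shows "subset_prob A p (\<lambda>S. T < real (card {v\<in>V. Q v S})) \<le> (\<Sum>v\<in>V. subset_prob A p (Q v)) / T"
proof -
  have card_sum: "real (card {v\<in>V. Q v S}) = (\<Sum>v\<in>V. if Q v S then 1 else 0)" for S
    using \<open>finite V\<close> by (simp add: sum.If_cases Int_def)
  have "subset_prob A p (\<lambda>S. T < real (card {v\<in>V. Q v S}))
      \<le> (\<Sum>S\<in>Pow A. subset_weight A p S * (real (card {v\<in>V. Q v S}) / T))"
    by (rule subset_prob_markov) (use assms in auto)
  also have "\<dots> = (\<Sum>v\<in>V. subset_prob A p (Q v)) / T"
    unfolding subset_prob_def card_sum sum_divide_distrib sum_distrib_left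
    by (subst sum.swap) (intro sum.cong refl; simp)
  finally show ?thesis .
qed

lemma one_plus_power_le_exp: "0 \<le> 1 + x \<Longrightarrow> (1 + x) ^ k \<le> exp (real k * x)"
  using power_mono[of "1 + x" "exp x" k] exp_ge_add_one_self[of x]
  by (simp add: exp_of_nat_mult add.commute)

lemma exp_minus_one_le:
  fixes l :: real
  assumes "\<bar>l\<bar> \<le> 1"
  shows "exp l - 1 \<le> l + l\<^sup>2"
proof (cases "0 \<le> l")
  case True
  then show ?thesis using exp_bound[of l] assms by simp
next
  case False
  have "(1 - l) * exp l \<le> exp (- l) * exp l"
    using exp_ge_add_one_self[of "-l"] by (intro mult_right_mono) auto
  also have "\<dots> = 1" by (simp add: exp_minus_inverse mult.commute)
  also have "1 \<le> (1 - l) * (1 + l + l\<^sup>2)"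
  proof -
    have "0 \<le> - l * l\<^sup>2" using False by (intro mult_nonneg_nonneg) auto
    then show ?thesis by (simp add: algebra_simps power2_eq_square)
  qed
  finally show ?thesis using False by (simp add: mult_le_cancel_left)
qed

lemma subset_prob_exp_moment:
  assumes A: "finite A" "B \<subseteq> A" and p: "0 \<le> p" "p \<le> 1"
  shows "subset_prob A p (\<lambda>S. c \<le> lam * real (card (S \<inter> B)))
           \<le> exp (p * real (card B) * (exp lam - 1) - c)"
proof -
  have "subset_prob A p (\<lambda>S. c \<le> lam * real (card (S \<inter> B)))
      \<le> (\<Sum>S\<in>Pow A. subset_weight A p S * (exp (- c) * exp lam ^ card (S \<inter> B)))"
  proof (rule subset_prob_markov[OF p])
    fix S assume "c \<le> lam * real (card (S \<inter> B))"
    then have "1 \<le> exp (lam * real (card (S \<inter> B)) - c)" by simp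
    then show "1 \<le> exp (- c) * exp lam ^ card (S \<inter> B)"
      by (simp add: exp_of_nat_mult[symmetric] exp_diff exp_minus field_simps)
  qed simp
  also have "\<dots> = exp (- c) * (\<Sum>S\<in>Pow A. subset_weight A p S * exp lam ^ card (S \<inter> B))"
    by (simp add: sum_distrib_left mult.left_commute)
  also have "\<dots> = exp (- c) * (1 + p * (exp lam - 1)) ^ card B"
    using sum_subset_weight_power_card_Int[OF A, of p "exp lam"] by (simp add: algebra_simps)
  also have "\<dots> \<le> exp (- c) * exp (real (card B) * (p * (exp lam - 1)))"
  proof -
    have "0 \<le> (1 - p) + p * exp lam" using p by simp
    then show ?thesis
      using one_plus_power_le_exp[of "p * (exp lam - 1)" "card B"]
      by (intro mult_left_mono) (simp_all add: algebra_simps)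
  qed
  also have "\<dots> = exp (p * real (card B) * (exp lam - 1) - c)"
    unfolding mult_exp_exp by (simp add: algebra_simps)
  finally show ?thesis .
qed

lemma subset_prob_deviation:
  assumes A: "finite A" "B \<subseteq> A" and p: "0 \<le> p" "p \<le> 1"
    and mu: "mu = p * real (card B)" and t: "0 < t" "t \<le> 2 * mu"
  shows "subset_prob A p (\<lambda>S. t \<le> \<bar>real (card (S \<inter> B)) - mu\<bar>) \<le> 2 * exp (- (t\<^sup>2) / (4 * mu))"
proof -
  define l where "l = t / (2 * mu)"
  have "0 < mu" using t by simp
  then have l: "0 < l" "l \<le> 1" using t by (auto simp: l_def)
  \<comment> \<open>Both tails are exponential-moment bounds, with \<open>lam = l\<close> and \<open>lam = -l\<close>.\<close>
  have tail: "subset_prob A p (\<lambda>S. lam * mu + l * t \<le> lam * real (card (S \<inter> B)))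
                \<le> exp (- (t\<^sup>2) / (4 * mu))" if "\<bar>lam\<bar> = l" for lam
  proof -
    have "\<bar>lam\<bar> \<le> 1" and "lam\<^sup>2 = l\<^sup>2" using that l by (simp, metis power2_abs)
    then have "exp lam - 1 \<le> lam + l\<^sup>2" using exp_minus_one_le[of lam] by simp
    then have "mu * (exp lam - 1) \<le> mu * (lam + l\<^sup>2)"
      using \<open>0 < mu\<close> by (intro mult_left_mono) auto
    moreover have "mu * (lam + l\<^sup>2) - (lam * mu + l * t) = - (t\<^sup>2) / (4 * mu)"
      using \<open>0 < mu\<close> by (simp add: l_def field_simps power2_eq_square)
    ultimately have "exp (mu * (exp lam - 1) - (lam * mu + l * t)) \<le> exp (- (t\<^sup>2) / (4 * mu))"
      by simp
    then show ?thesis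
      using subset_prob_exp_moment[OF A p, of "lam * mu + l * t" lam] unfolding mu[symmetric]
      by linarith
  qed
  let ?X = "\<lambda>S. real (card (S \<inter> B))"
  have "subset_prob A p (\<lambda>S. t \<le> \<bar>?X S - mu\<bar>)
      \<le> subset_prob A p (\<lambda>S. l * mu + l * t \<le> l * ?X S \<or> - l * mu + l * t \<le> - l * ?X S)"
  proof (rule subset_prob_mono[OF p])
    fix S assume "t \<le> \<bar>?X S - mu\<bar>"
    then have "mu + t \<le> ?X S \<or> ?X S \<le> mu - t" by arith
    then show "l * mu + l * t \<le> l * ?X S \<or> - l * mu + l * t \<le> - l * ?X S"
      using mult_left_mono[of "mu + t" "?X S" l] mult_left_mono[of "?X S" "mu - t" l] l
      by (auto simp: algebra_simps)
  qed
  also have "\<dots> \<le> subset_prob A p (\<lambda>S. l * mu + l * t \<le> l * ?X S)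
                    + subset_prob A p (\<lambda>S. - l * mu + l * t \<le> - l * ?X S)"
    by (rule subset_prob_disj[OF p])
  also have "\<dots> \<le> 2 * exp (- (t\<^sup>2) / (4 * mu))"
    using tail[of l] tail[of "- l"] l by simp
  finally show ?thesis .
qed

lemma subset_prob_deviation_cube:
  assumes "finite A" "B \<subseteq> A" "0 \<le> p" "p \<le> 1" and mu: "mu = p * real (card B)"
    and "0 < a" "1 \<le> y" "a * y\<^sup>2 / 12 \<le> mu" "mu \<le> a * y ^ 3"
  shows "subset_prob A p (\<lambda>S. a * y\<^sup>2 / 6 \<le> \<bar>real (card (S \<inter> B)) - mu\<bar>) \<le> 2 * exp (- (a * y / 144))"
proof -
  have "0 < a * y\<^sup>2 / 12" using assms by simp
  then have "0 < mu" using assms by linarith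
  have "a * y / 144 = (a * y\<^sup>2 / 6)\<^sup>2 / (4 * (a * y ^ 3))"
    using assms by (simp add: field_simps power2_eq_square power3_eq_cube)
  also have "\<dots> \<le> (a * y\<^sup>2 / 6)\<^sup>2 / (4 * mu)"
    using assms \<open>0 < mu\<close> by (intro divide_left_mono) auto
  finally have "exp (- (a * y\<^sup>2 / 6)\<^sup>2 / (4 * mu)) \<le> exp (- (a * y / 144))"
    unfolding minus_divide_left[symmetric] by (intro exp_mono) linarith
  moreover have "subset_prob A p (\<lambda>S. a * y\<^sup>2 / 6 \<le> \<bar>real (card (S \<inter> B)) - mu\<bar>)
      \<le> 2 * exp (- (a * y\<^sup>2 / 6)\<^sup>2 / (4 * mu))"
    by (rule subset_prob_deviation) (use assms in auto)
  ultimately show ?thesis by linarith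
qed

lemma gnp_prob_eq_subset_prob: "gnp_prob n p P = subset_prob (gpairs n) p P"
  unfolding gnp_prob_def subset_prob_def subset_weight_def by simp

lemma finite_gpairs: "finite (gpairs n)"
  unfolding gpairs_def by (rule finite_subset[of _ "{..<n} \<times> {..<n}"]) auto

lemma card_gpairs: "real (card (gpairs n)) = real n * (real n - 1) / 2"
proof (induction n)
  case 0
  then show ?case by (simp add: gpairs_def)
next
  case (Suc n)
  have "gpairs (Suc n) = gpairs n \<union> (\<lambda>i. (i, n)) ` {..<n}"
    and "gpairs n \<inter> (\<lambda>i. (i, n)) ` {..<n} = {}"
    unfolding gpairs_def by auto
  then have "card (gpairs (Suc n)) = card (gpairs n) + n"
    using finite_gpairs by (simp add: card_Un_disjoint card_image inj_on_def)
  then show ?case using Suc by (simp add: field_simps)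
qed

definition incident :: "nat \<Rightarrow> nat \<Rightarrow> (nat \<times> nat) set" where
  "incident n v = {e\<in>gpairs n. fst e = v \<or> snd e = v}"

lemma incident_subset: "incident n v \<subseteq> gpairs n"
  unfolding incident_def by auto

lemma card_incident: "v < n \<Longrightarrow> card (incident n v) = n - 1"
proof -
  assume "v < n"
  then have "incident n v = (\<lambda>i. (i, v)) ` {..<v} \<union> (\<lambda>j. (v, j)) ` {v<..<n}"
    unfolding incident_def gpairs_def by auto
  then have "card (incident n v) = v + (n - Suc v)"
    by (simp only:) (subst card_Un_disjoint; auto simp: card_image inj_on_def)
  with \<open>v < n\<close> show ?thesis by simp
qed

lemma gdeg_eq_card_incident: "S \<subseteq> gpairs n \<Longrightarrow> gdeg S v = card (S \<inter> incident n v)"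
  unfolding gdeg_def incident_def by (rule arg_cong[where f=card]) auto

lemma gdeg_near_avg_deg:
  assumes "2 \<le> n" and "0 \<le> p" "p \<le> x / 3"
    and deg: "\<bar>real (gdeg S v) - p * (real n - 1)\<bar> < x / 3"
    and edges: "\<bar>real (card S) - p * real (card (gpairs n))\<bar> < (real n - 1) * x / 6"
  shows "\<bar>real (gdeg S v) - avg_deg n S\<bar> < x"
proof -
  have n1: "1 \<le> real n - 1" using \<open>2 \<le> n\<close> by simp
  define E where "E = real (card S) - p * real (card (gpairs n))"
  have "avg_deg n S - p * real n = 2 * E / (real n - 1)"
    using n1 unfolding avg_deg_def E_def card_gpairs by (simp add: field_simps)
  also have "\<bar>\<dots>\<bar> = 2 * \<bar>E\<bar> / (real n - 1)"
    using n1 by (simp add: abs_divide)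
  also have "\<dots> < x / 3"
    using edges n1 unfolding E_def[symmetric] by (simp add: pos_divide_less_eq mult.commute)
  finally have "\<bar>avg_deg n S - p * real n\<bar> < x / 3" .
  moreover have "\<bar>real (gdeg S v) - (p * real n - p)\<bar> < x / 3"
    using deg by (simp add: right_diff_distrib)
  ultimately show ?thesis using \<open>0 \<le> p\<close> \<open>p \<le> x / 3\<close> by linarith
qed

lemma degree_deviation_prob:
  assumes n: "2 \<le> n" and p: "0 < p" "p \<le> 1" and "v < n"
    and y: "y ^ 3 = p * real n" "2 \<le> y"
  shows "subset_prob (gpairs n) p
           (\<lambda>S. 2 * y\<^sup>2 / 6 \<le> \<bar>real (card (S \<inter> incident n v)) - p * (real n - 1)\<bar>)
         \<le> 2 * exp (- (2 * y / 144))"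
proof (rule subset_prob_deviation_cube[OF finite_gpairs incident_subset])
  show "p * (real n - 1) = p * real (card (incident n v))"
    using card_incident[OF \<open>v < n\<close>] n by (simp add: of_nat_diff)
  have "y\<^sup>2 \<le> y ^ 3" using y by (intro power_increasing) auto
  moreover have "2 * p \<le> p * real n"
    using n p mult_left_mono[of 2 "real n" p] by (simp add: mult.commute)
  moreover have "p * (real n - 1) = p * real n - p" by (simp add: algebra_simps)
  ultimately show "2 * y\<^sup>2 / 12 \<le> p * (real n - 1)" "p * (real n - 1) \<le> 2 * y ^ 3"
    using p y zero_le_power2[of y] by linarith+
qed (use p y in auto)

lemma edge_count_deviation_prob:
  assumes n: "2 \<le> n" and p: "0 < p" "p \<le> 1"
    and y: "y ^ 3 = p * real n" "2 \<le> y"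
  shows "subset_prob (gpairs n) p
           (\<lambda>S. (real n - 1) * y\<^sup>2 / 6 \<le> \<bar>real (card (S \<inter> gpairs n)) - p * real (card (gpairs n))\<bar>)
         \<le> 2 * exp (- ((real n - 1) * y / 144))"
proof (rule subset_prob_deviation_cube[OF finite_gpairs subset_refl])
  have "p * real (card (gpairs n)) = (real n - 1) * y ^ 3 / 2"
    using y unfolding card_gpairs by (simp add: field_simps)
  moreover have "y\<^sup>2 \<le> y ^ 3" using y by (intro power_increasing) auto
  then have "0 \<le> (real n - 1) * y\<^sup>2" "(real n - 1) * y\<^sup>2 \<le> (real n - 1) * y ^ 3"
    using n by (auto intro: mult_left_mono)
  ultimately show "(real n - 1) * y\<^sup>2 / 12 \<le> p * real (card (gpairs n))"
    "p * real (card (gpairs n)) \<le> (real n - 1) * y ^ 3"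
    by linarith+
qed (use n p y in auto)

lemma gnp_prob_atypical_vertex:
  assumes n: "2 \<le> n" and p: "0 < p" "p \<le> 1" and "v < n"
    and y: "y ^ 3 = p * real n" "2 \<le> y"
  shows "gnp_prob n p (\<lambda>S. y\<^sup>2 < \<bar>real (gdeg S v) - avg_deg n S\<bar>) \<le> 4 * exp (- y / 144)"
proof -
  let ?deg_dev = "\<lambda>S. 2 * y\<^sup>2 / 6 \<le> \<bar>real (card (S \<inter> incident n v)) - p * (real n - 1)\<bar>"
  let ?edge_dev = "\<lambda>S. (real n - 1) * y\<^sup>2 / 6
                        \<le> \<bar>real (card (S \<inter> gpairs n)) - p * real (card (gpairs n))\<bar>"
  have "p \<le> y\<^sup>2 / 3"
    using p y power_mono[of 2 y 2] by simp
  have "subset_prob (gpairs n) p (\<lambda>S. y\<^sup>2 < \<bar>real (gdeg S v) - avg_deg n S\<bar>)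
      \<le> subset_prob (gpairs n) p (\<lambda>S. ?deg_dev S \<or> ?edge_dev S)"
  proof (rule subset_prob_mono)
    fix S assume S: "S \<subseteq> gpairs n" and "y\<^sup>2 < \<bar>real (gdeg S v) - avg_deg n S\<bar>"
    then show "?deg_dev S \<or> ?edge_dev S"
      using gdeg_near_avg_deg[OF n _ \<open>p \<le> y\<^sup>2 / 3\<close>, of S v] p
      by (force simp: gdeg_eq_card_incident Int_absorb2)
  qed (use p in auto)
  also have "\<dots> \<le> subset_prob (gpairs n) p ?deg_dev + subset_prob (gpairs n) p ?edge_dev"
    by (rule subset_prob_disj) (use p in auto)
  also have "\<dots> \<le> 2 * exp (- (2 * y / 144)) + 2 * exp (- ((real n - 1) * y / 144))"
    using degree_deviation_prob[OF assms] edge_count_deviation_prob[OF n p y] by (rule add_mono)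
  also have "\<dots> \<le> 4 * exp (- y / 144)"
  proof -
    have "y \<le> (real n - 1) * y" using y n mult_right_mono[of 1 "real n - 1" y] by simp
    then have "exp (- ((real n - 1) * y / 144)) \<le> exp (- y / 144)" by simp
    moreover have "exp (- (2 * y / 144)) \<le> exp (- y / 144)" using y by simp
    ultimately show ?thesis by linarith
  qed
  finally show ?thesis by (simp add: gnp_prob_eq_subset_prob)
qed

lemma num_atypical_eq_card:
  "num_atypical n x S = card {v\<in>{..<n}. x < \<bar>real (gdeg S v) - avg_deg n S\<bar>}"
  unfolding num_atypical_def by (rule arg_cong[where f=card]) auto

lemma gnp_prob_num_atypical_gt:
  assumes "2 \<le> n" "0 < p" "p \<le> 1" "y ^ 3 = p * real n" "2 \<le> y" "0 < T"
  shows "gnp_prob n p (\<lambda>S. T < real (num_atypical n (y\<^sup>2) S)) \<le> 4 * real n * exp (- y / 144) / T"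
proof -
  have "gnp_prob n p (\<lambda>S. T < real (num_atypical n (y\<^sup>2) S))
      \<le> (\<Sum>v<n. gnp_prob n p (\<lambda>S. y\<^sup>2 < \<bar>real (gdeg S v) - avg_deg n S\<bar>)) / T"
    unfolding gnp_prob_eq_subset_prob num_atypical_eq_card
    by (rule subset_prob_card_gt) (use assms in auto)
  also have "\<dots> \<le> (\<Sum>v<n. 4 * exp (- y / 144)) / T"
    using assms gnp_prob_atypical_vertex
    by (intro divide_right_mono sum_mono) auto
  finally show ?thesis by (simp add: mult.commute)
qed

lemma gnp_prob_few_atypical:
  assumes n: "2 \<le> n" and p: "0 < p" "p \<le> 1"
    and y: "y ^ 3 = p * real n" "1000 \<le> y" and z: "0 \<le> z" "z \<le> y"
  shows "gnp_prob n p (\<lambda>S. real (num_atypical n (y\<^sup>2) S) \<le> real n / exp (1/576 * z))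
           \<ge> 1 - exp (- (1/576) * y)"
proof -
  define T where "T = real n / exp (1/576 * z)"
  have "gnp_prob n p (\<lambda>S. T < real (num_atypical n (y\<^sup>2) S)) \<le> 4 * real n * exp (- y / 144) / T"
    by (rule gnp_prob_num_atypical_gt) (use n p y in \<open>auto simp: T_def\<close>)
  also have "\<dots> = 4 * exp (- y / 144) * exp (1/576 * z)"
    using n by (simp add: T_def)
  also have "\<dots> \<le> 4 * exp (- y / 144) * exp (y / 288 - y / 576)"
    using z by (intro mult_left_mono) auto
  also have "\<dots> = 4 * exp (- (y / 288)) * exp (- (1/576) * y)"
    by (simp add: mult_exp_exp)
  also have "\<dots> \<le> exp (- (1/576) * y)"
    using exp_ge_add_one_self[of "y / 288"] y by (simp add: exp_minus field_simps)
  finally show ?thesis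
    using subset_prob_not[OF finite_gpairs, of n p "\<lambda>S. T < real (num_atypical n (y\<^sup>2) S)"]
    unfolding gnp_prob_eq_subset_prob T_def[symmetric] not_less by simp
qed

lemma powr_one_third_cube: "0 \<le> q \<Longrightarrow> (q powr (1/3)) ^ 3 = (q::real)"
  by (cases "q = 0") (simp_all add: powr_realpow[symmetric] powr_powr)

lemma powr_two_thirds: "0 \<le> q \<Longrightarrow> (q::real) powr (2/3) = (q powr (1/3))\<^sup>2"
  by (cases "q = 0") (simp_all add: powr_realpow[symmetric] powr_powr)

theorem lemma4p3:
  fixes f :: "nat \<Rightarrow> real"
  assumes "\<And>n. f n \<ge> 0"
    and "filterlim f at_top sequentially"
  shows "\<exists>C>0. \<forall>\<^sub>F n in sequentially. \<forall>p::real. f n / real n \<le> p \<and> p \<le> 1 \<longrightarrow>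
           gnp_prob n p (\<lambda>S. real (num_atypical n ((p * real n) powr (2/3)) S)
                               \<le> real n / exp (C * f n powr (1/3)))
             \<ge> 1 - exp (- C * (p * real n) powr (1/3))"
proof (intro exI[of _ "1/576"] conjI)
  have "\<forall>\<^sub>F n in sequentially. 1000 ^ 3 \<le> f n \<and> 2 \<le> n"
    using assms(2) by (simp add: filterlim_at_top eventually_conj eventually_ge_at_top)
  then show "\<forall>\<^sub>F n in sequentially. \<forall>p::real. f n / real n \<le> p \<and> p \<le> 1 \<longrightarrow>
      gnp_prob n p (\<lambda>S. real (num_atypical n ((p * real n) powr (2/3)) S)
                          \<le> real n / exp (1/576 * f n powr (1/3)))
        \<ge> 1 - exp (- (1/576) * (p * real n) powr (1/3))"
  proof (elim eventually_mono, intro allI impI, elim conjE)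
    fix n :: nat and p :: real
    assume f: "1000 ^ 3 \<le> f n" and n: "2 \<le> n" and "f n / real n \<le> p" "p \<le> 1"
    define y where "y = (p * real n) powr (1/3)"
    have "f n \<le> p * real n" using \<open>f n / real n \<le> p\<close> n by (simp add: field_simps)
    then have "0 < p * real n" using f by simp
    then have y3: "y ^ 3 = p * real n" and "0 < p"
      using powr_one_third_cube[of "p * real n"] by (simp_all add: y_def zero_less_mult_iff)
    have "1000 \<le> y"
      by (rule power_le_imp_le_base[of _ 2]) (use y3 f \<open>f n \<le> p * real n\<close> in \<open>simp_all add: y_def\<close>)
    have "f n powr (1/3) \<le> y"
      using \<open>f n \<le> p * real n\<close> assms(1) by (simp add: y_def powr_mono2)
    moreover have "(p * real n) powr (2/3) = y\<^sup>2"
      using \<open>0 < p * real n\<close> by (simp add: y_def powr_two_thirds)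
    ultimately show "gnp_prob n p (\<lambda>S. real (num_atypical n ((p * real n) powr (2/3)) S)
                                  \<le> real n / exp (1/576 * f n powr (1/3)))
        \<ge> 1 - exp (- (1/576) * (p * real n) powr (1/3))"
      using gnp_prob_few_atypical[OF n \<open>0 < p\<close> \<open>p \<le> 1\<close> y3 \<open>1000 \<le> y\<close>, of "f n powr (1/3)"]
      unfolding y_def[symmetric] by simp
  qed
qed simp

end
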